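(* Let $f\in\widetilde M$ with $\operatorname{ord}f=0$ and suppose $(D_1+D_2)f=\omega x_{12}f$ for a constant $\omega$. Then $[f]=F(p_0)=\sum_{i=-n_1}^{n_2}a_ip_0^i$ for some integers $n_1,n_2$ and coefficients $a_i\in M$.
   Context: Let $x_{11},x_{12},x_{13},x_{21},x_{22},x_{23},s_1,s_2,s_3$ be independent variables (coordinates on an open subset of $\operatorname{Mat}_3$, with $s_1=x_{13}x_{31}-x_{21}x_{23}$, $s_2$ the determinant of the $4\times4$ matrix with rows $(x_{21},x_{22},x_{23},0),(x_{31},x_{32},x_{33},0),(0,x_{11},x_{12},x_{13}),(0,x_{21},x_{22},x_{23})$, $s_3=\det X$). Let $p$ be the determinant of the $4\times4$ matrix with rows $(x_{11},x_{12},x_{13},0),(x_{21},x_{22},x_{23},0),(0,x_{11},x_{12},x_{13}),(0,x_{21},x_{22},x_{23})$; $p=p_0+x_{12}p_1+x_{12}^2p_2$ with $p_0=x_{11}x_{13}x_{22}^2+(x_{11}x_{23}-x_{13}x_{21})^2$, $p_1=x_{22}(x_{13}x_{21}+x_{11}x_{23})$, $p_2=x_{21}x_{23}$. Let $M=\mathbb C[x_{11},x_{13},x_{21},s_1,s_2,s_3]_{x_{11}x_{13}x_{21}}$, $\widehat M=M[x_{22},x_{23}]_{p_0}$, $\widetilde M=\widehat M[x_{12}]_p$ (localizations). For nonzero $f\in\widetilde M$, $\operatorname{ord}f$ is the largest $\nu\ge0$ with $f\in x_{12}^\nu\widetilde M$. If $\operatorname{ord}f=0$, $[f]$ denotes the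 unique element of $\widehat M$ with $f-[f]\in x_{12}\widetilde M$; if $\operatorname{ord} f>0$, $[f]=0$. The derivations are $D_1=\tfrac23x_{12}\big(-\partial_{x_{11}}+\partial_{x_{13}}+\partial_{x_{21}}+2\partial_{x_{22}}+\partial_{s_1}+2\partial_{s_2}\big)$ and $D_2=2(x_{13}x_{21}-x_{11}x_{23})\partial_{x_{22}}+2x_{13}x_{22}\partial_{x_{23}}$ (partials in the nine coordinates above). (For the Cremmer–Gervais Poisson bracket on $\operatorname{Mat}_3$ one has $\{x_{12},f\}=(D_1+D_2)f$ for all $f\in\widetilde M$.) *)

theory Defs
  imports "HOL-Analysis.Analysis"
begin

text \<open>Points are functions nat => complex; coordinate indices:
 0 = x11, 1 = x12, 2 = x13, 3 = x21, 4 = x22, 5 = x23, 6 = s1, 7 = s2, 8 = s3.\<close>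

type_synonym pt = "nat \<Rightarrow> complex"
type_synonym fn = "pt \<Rightarrow> complex"

inductive_set polyfun :: "nat set \<Rightarrow> fn set" for V :: "nat set" where
  pf_const: "(\<lambda>z. c) \<in> polyfun V"
| pf_var: "i \<in> V \<Longrightarrow> (\<lambda>z. z i) \<in> polyfun V"
| pf_add: "P \<in> polyfun V \<Longrightarrow> Q \<in> polyfun V \<Longrightarrow> (\<lambda>z. P z + Q z) \<in> polyfun V"
| pf_mult: "P \<in> polyfun V \<Longrightarrow> Q \<in> polyfun V \<Longrightarrow> (\<lambda>z. P z * Q z) \<in> polyfun V"

definition p0 :: fn where
  "p0 z = z 0 * z 2 * (z 4)^2 + (z 0 * z 5 - z 2 * z 3)^2"
definition p1 :: fn where
  "p1 z = z 4 * (z 2 * z 3 + z 0 * z 5)"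
definition p2 :: fn where
  "p2 z = z 3 * z 5"
definition pp :: fn where
  "pp z = p0 z + z 1 * p1 z + (z 1)^2 * p2 z"

text \<open>The open set on which all elements of the localizations are defined.
 Elements are represented canonically as functions vanishing outside U.\<close>
definition U :: "pt set" where
  "U = {z. z 0 \<noteq> 0 \<and> z 2 \<noteq> 0 \<and> z 3 \<noteq> 0 \<and> p0 z \<noteq> 0 \<and> pp z \<noteq> 0}"

definition M :: "fn set" where
  "M = {f. \<exists>P \<in> polyfun {0,2,3,6,7,8}. \<exists>k::nat.
          f = (\<lambda>z. if z \<in> U then P z / (z 0 * z 2 * z 3) ^ k else 0)}"

definition Mhat :: "fn set" where
  "Mhat = {f. \<exists>P \<in> polyfun {0,2,3,4,5,6,7,8}. \<exists>k::nat.
          f = (\<lambda>z. if z \<in> U then P z / (z 0 * z 2 * z 3 * p0 z) ^ k else 0)}"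

definition Mtilde :: "fn set" where
  "Mtilde = {f. \<exists>P \<in> polyfun {0..8}. \<exists>k::nat.
          f = (\<lambda>z. if z \<in> U then P z / (z 0 * z 2 * z 3 * p0 z * pp z) ^ k else 0)}"

definition x12pow_Mtilde :: "nat \<Rightarrow> fn set" where
  "x12pow_Mtilde \<nu> = (\<lambda>g. (\<lambda>z. (z 1) ^ \<nu> * g z)) ` Mtilde"

definition ord :: "fn \<Rightarrow> nat" where
  "ord f = (GREATEST \<nu>. f \<in> x12pow_Mtilde \<nu>)"

definition bracket :: "fn \<Rightarrow> fn" where
  "bracket f = (if ord f = 0 then (THE g. g \<in> Mhat \<and> (\<lambda>z. f z - g z) \<in> x12pow_Mtilde 1)
                else (\<lambda>z. 0))"

definition partial :: "nat \<Rightarrow> fn \<Rightarrow> fn" where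
  "partial i f z = deriv (\<lambda>t. f (z(i := t))) (z i)"

definition D1 :: "fn \<Rightarrow> fn" where
  "D1 f z = 2/3 * z 1 * (- partial 0 f z + partial 2 f z + partial 3 f z
       + 2 * partial 4 f z + partial 6 f z + 2 * partial 7 f z)"

definition D2 :: "fn \<Rightarrow> fn" where
  "D2 f z = 2 * (z 2 * z 3 - z 0 * z 5) * partial 4 f z + 2 * z 2 * z 4 * partial 5 f z"

end

theory Submission
  imports Defs
begin

text \<open>On \<open>x12 = 0\<close> the derivation \<open>D1\<close> vanishes, so the equation says that \<open>[f]\<close>, the
  restriction of \<open>f\<close> to \<open>x12 = 0\<close>, is annihilated by \<open>D2\<close>, i.e. constant along the flow of
  \<open>D2\<close>. Writing \<open>\<rho>\<^sup>2 = x11 x13\<close> and \<open>u = x11 x23 - x13 x21\<close>, we have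
  \<open>p0 = (\<rho> x22)\<^sup>2 + u\<^sup>2\<close>, and the flow rotates \<open>(\<rho> x22, u)\<close>; hence every point is connected
  to both points with \<open>u = 0\<close> and \<open>\<rho> x22 = \<plusminus>\<surd>p0\<close>. At such a point a polynomial becomes a
  polynomial in \<open>x22\<close> with coefficients in the coordinates of \<open>M\<close>, and averaging over the two
  signs leaves only even powers of \<open>x22\<close>, i.e. powers of \<open>p0 / (x11 x13)\<close>. Together with the
  powers of \<open>p0\<close> in the denominator this exhibits \<open>[f]\<close> as a Laurent polynomial in \<open>p0\<close>.\<close>

lemma polyfun_mono: "P \<in> polyfun V \<Longrightarrow> V \<subseteq> W \<Longrightarrow> P \<in> polyfun W"
  by (induction rule: polyfun.induct) (auto intro!: pf_const pf_var pf_add pf_mult)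

lemma polyfun_power: "P \<in> polyfun V \<Longrightarrow> (\<lambda>z. P z ^ n) \<in> polyfun V"
  by (induction n) (simp_all add: pf_const pf_mult)

lemma polyfun_diff: "P \<in> polyfun V \<Longrightarrow> Q \<in> polyfun V \<Longrightarrow> (\<lambda>z. P z - Q z) \<in> polyfun V"
  using pf_add[OF _ pf_mult[OF pf_const[of "-1"]], of P V Q] by simp

lemma polyfun_sum:
  "finite A \<Longrightarrow> (\<And>i. i \<in> A \<Longrightarrow> f i \<in> polyfun V) \<Longrightarrow> (\<lambda>z. \<Sum>i\<in>A. f i z) \<in> polyfun V"
  by (induction A rule: finite_induct) (simp_all add: pf_const pf_add)

lemma polyfun_upd_indep: "P \<in> polyfun V \<Longrightarrow> i \<notin> V \<Longrightarrow> P (z(i := v)) = P z"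
  by (induction rule: polyfun.induct) auto

lemma polyfun_upd_const: "P \<in> polyfun V \<Longrightarrow> (\<lambda>z. P (z(i := c))) \<in> polyfun (V - {i})"
proof (induction rule: polyfun.induct)
  case (pf_var j)
  show ?case
  proof (cases "i = j")
    case False
    with pf_var show ?thesis by (simp add: polyfun.pf_var)
  qed (simp add: pf_const)
qed (auto intro!: pf_const pf_add pf_mult)

lemma polyfun_factor_coord:
  "P \<in> polyfun V \<Longrightarrow> \<exists>R\<in>polyfun V. \<forall>z. P z - P (z(i := 0)) = z i * R z"
proof (induction rule: polyfun.induct)
  case (pf_const c)
  show ?case by (intro bexI[of _ "\<lambda>z. 0"]) (simp_all add: polyfun.pf_const)
next
  case (pf_var j)
  show ?case
  proof (cases "i = j")
    case True
    then show ?thesis by (auto intro!: bexI[of _ "\<lambda>z. 1"] pf_const)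
  next
    case False
    then show ?thesis by (auto intro!: bexI[of _ "\<lambda>z. 0"] pf_const)
  qed
next
  case (pf_add P Q)
  then obtain R S where "R \<in> polyfun V" "S \<in> polyfun V"
    and R: "\<forall>z. P z - P (z(i := 0)) = z i * R z" and S: "\<forall>z. Q z - Q (z(i := 0)) = z i * S z"
    by blast
  moreover have "P z + Q z - (P (z(i := 0)) + Q (z(i := 0))) = z i * (R z + S z)" for z
    using R[rule_format, of z] S[rule_format, of z] by (simp add: algebra_simps)
  ultimately show ?case
    by (intro bexI[of _ "\<lambda>z. R z + S z"] polyfun.pf_add) blast+
next
  case (pf_mult P Q)
  then obtain R S where "R \<in> polyfun V" "S \<in> polyfun V"
    and R: "\<forall>z. P z - P (z(i := 0)) = z i * R z" and S: "\<forall>z. Q z - Q (z(i := 0)) = z i * S z"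
    by blast
  moreover have "(\<lambda>z. P (z(i := 0))) \<in> polyfun V"
    using polyfun_upd_const[OF pf_mult.hyps(1)] polyfun_mono by blast
  moreover have "P z * Q z - P (z(i := 0)) * Q (z(i := 0))
      = z i * (R z * Q z + P (z(i := 0)) * S z)" for z
  proof -
    have "P z * Q z - P (z(i := 0)) * Q (z(i := 0))
        = (P z - P (z(i := 0))) * Q z + P (z(i := 0)) * (Q z - Q (z(i := 0)))"
      by (simp add: algebra_simps)
    then show ?thesis
      using R[rule_format, of z] S[rule_format, of z] by (simp add: algebra_simps)
  qed
  ultimately show ?case
    using pf_mult.hyps
    by (intro bexI[of _ "\<lambda>z. R z * Q z + P (z(i := 0)) * S z"] polyfun.pf_add polyfun.pf_mult) blast+
qed

section \<open>The bracket\<close>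

definition den :: fn where
  "den z = z 0 * z 2 * z 3 * p0 z * pp z"

lemma U_eq_den: "U = {z. den z \<noteq> 0}"
  unfolding U_def den_def by auto

lemma Mtilde_den:
  "Mtilde = {f. \<exists>P \<in> polyfun {0..8}. \<exists>k. f = (\<lambda>z. if z \<in> U then P z / den z ^ k else 0)}"
  unfolding Mtilde_def den_def ..

lemma p0_polyfun: "p0 \<in> polyfun {0..8}"
proof -
  have "(\<lambda>z. z 0 * z 2 * (z 4)^2 + (z 0 * z 5 - z 2 * z 3)^2) \<in> polyfun {0..8}"
    by (intro polyfun_power polyfun_diff pf_add pf_mult pf_var) auto
  then show ?thesis unfolding p0_def[abs_def] .
qed

lemma pp_polyfun: "pp \<in> polyfun {0..8}"
proof -
  have "(\<lambda>z. p0 z + z 1 * (z 4 * (z 2 * z 3 + z 0 * z 5)) + (z 1)^2 * (z 3 * z 5)) \<in> polyfun {0..8}"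
    by (intro polyfun_power pf_add pf_mult pf_var p0_polyfun) auto
  then show ?thesis unfolding pp_def[abs_def] p1_def p2_def .
qed

lemma den_polyfun: "den \<in> polyfun {0..8}"
proof -
  have "(\<lambda>z. z 0 * z 2 * z 3 * p0 z * pp z) \<in> polyfun {0..8}"
    by (intro pf_mult pf_var p0_polyfun pp_polyfun) auto
  then show ?thesis unfolding den_def[abs_def] .
qed

lemma p0_upd_x12 [simp]: "p0 (z(1 := v)) = p0 z" "p0 (z(Suc 0 := v)) = p0 z"
  by (simp_all add: p0_def)

lemma pp_x12_zero: "z 1 = 0 \<Longrightarrow> pp z = p0 z"
  by (simp add: pp_def)

lemma pp_upd_x12_zero [simp]: "pp (z(1 := 0)) = p0 z" "pp (z(Suc 0 := 0)) = p0 z"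
  by (simp_all add: pp_x12_zero)

lemma den_upd_x12_zero [simp]:
  "den (z(1 := 0)) = z 0 * z 2 * z 3 * p0 z * p0 z"
  "den (z(Suc 0 := 0)) = z 0 * z 2 * z 3 * p0 z * p0 z"
  by (simp_all add: den_def)

lemma den_nonzero_coords: "den z \<noteq> 0 \<Longrightarrow> z 0 \<noteq> 0 \<and> z 2 \<noteq> 0 \<and> z 3 \<noteq> 0 \<and> p0 z \<noteq> 0"
  unfolding den_def by auto

lemma U_upd_x12_zero: "z \<in> U \<Longrightarrow> z(1 := 0) \<in> U"
  unfolding U_def by simp

definition at_x12_zero :: "fn \<Rightarrow> fn" where
  "at_x12_zero f z = (if z \<in> U then f (z(1 := 0)) else 0)"

lemma at_x12_zero_eqI:
  assumes "\<And>w. den w \<noteq> 0 \<Longrightarrow> w 1 = 0 \<Longrightarrow> f w = g w" and "\<And>z. g (z(1 := 0)) = g z"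
  shows "at_x12_zero f = (\<lambda>z. if z \<in> U then g z else 0)"
proof
  fix z
  have "den (z(1 := 0)) \<noteq> 0" if "z \<in> U"
    using U_upd_x12_zero[OF that] unfolding U_eq_den by simp
  then show "at_x12_zero f z = (if z \<in> U then g z else 0)"
    unfolding at_x12_zero_def using assms by simp
qed

lemma at_x12_zero_Mhat:
  assumes "f \<in> Mtilde"
  shows "at_x12_zero f \<in> Mhat"
proof -
  obtain P k where P: "P \<in> polyfun {0..8}"
    and f: "f = (\<lambda>z. if z \<in> U then P z / den z ^ k else 0)"
    using assms unfolding Mtilde_den by blast
  have num: "(\<lambda>z. P (z(1 := 0)) * (z 0 * z 2 * z 3) ^ k) \<in> polyfun {0,2,3,4,5,6,7,8}"
  proof (intro pf_mult polyfun_power pf_var)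
    show "(\<lambda>z. P (z(1 := 0))) \<in> polyfun {0,2,3,4,5,6,7,8}"
      using polyfun_upd_const[OF P] by (rule polyfun_mono) auto
  qed auto
  have eq: "at_x12_zero f z
      = (if z \<in> U then P (z(1 := 0)) * (z 0 * z 2 * z 3) ^ k / (z 0 * z 2 * z 3 * p0 z) ^ (2*k) else 0)"
    for z
  proof (cases "z \<in> U")
    case True
    then have "z 0 * z 2 * z 3 \<noteq> 0" unfolding U_def by auto
    moreover have "(z 0 * z 2 * z 3 * p0 z) ^ (2*k) = (z 0 * z 2 * z 3 * p0 z * p0 z) ^ k * (z 0 * z 2 * z 3) ^ k"
      by (simp add: power_mult power2_eq_square power_mult_distrib mult_ac)
    ultimately show ?thesis
      using True U_upd_x12_zero[OF True] unfolding at_x12_zero_def f by simp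
  qed (simp add: at_x12_zero_def)
  show ?thesis
    unfolding Mhat_def mem_Collect_eq
    by (rule bexI[OF _ num], rule exI[of _ "2*k"]) (simp add: fun_eq_iff eq)
qed

lemma x12_divides_cross_difference:
  assumes "P \<in> polyfun {0..8}"
  shows "\<exists>R \<in> polyfun {0..8}. \<forall>z. P z * den (z(1 := 0)) ^ k - P (z(1 := 0)) * den z ^ k = z 1 * R z"
proof -
  define N where "N z = P z * den (z(1 := 0)) ^ k - P (z(1 := 0)) * den z ^ k" for z
  have upd: "(\<lambda>z. Q (z(1 := 0))) \<in> polyfun {0..8}" if "Q \<in> polyfun {0..8}" for Q
    using polyfun_upd_const[OF that] by (rule polyfun_mono) auto
  have "N \<in> polyfun {0..8}"
    unfolding N_def[abs_def] using assms den_polyfun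
    by (intro polyfun_diff pf_mult polyfun_power upd)
  then obtain R where "R \<in> polyfun {0..8}" "\<forall>z. N z - N (z(1 := 0)) = z 1 * R z"
    using polyfun_factor_coord by blast
  moreover have "N (z(1 := 0)) = 0" for z
    unfolding N_def by simp
  ultimately show ?thesis
    unfolding N_def by auto
qed

lemma den_cube: "den z ^ 3 = den z * den (z(1 := 0)) * (z 0 * z 2 * z 3 * (pp z)\<^sup>2)"
  unfolding den_upd_x12_zero by (simp add: den_def power2_eq_square power3_eq_cube algebra_simps)

lemma diff_at_x12_zero_x12_multiple:
  assumes "f \<in> Mtilde"
  shows "(\<lambda>z. f z - at_x12_zero f z) \<in> x12pow_Mtilde 1"
proof -
  obtain P k where P: "P \<in> polyfun {0..8}"
    and f: "f = (\<lambda>z. if z \<in> U then P z / den z ^ k else 0)"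
    using assms unfolding Mtilde_den by blast
  obtain R where R: "R \<in> polyfun {0..8}"
    and NR: "\<And>z. P z * den (z(1 := 0)) ^ k - P (z(1 := 0)) * den z ^ k = z 1 * R z"
    using x12_divides_cross_difference[OF P] by blast
  define G where "G z = z 0 * z 2 * z 3 * (pp z)^2" for z
  define h where "h z = (if z \<in> U then R z * G z ^ k / den z ^ (3*k) else 0)" for z
  have "(\<lambda>z. R z * G z ^ k) \<in> polyfun {0..8}"
    unfolding G_def using R pp_polyfun by (intro pf_mult polyfun_power pf_var) auto
  then have "h \<in> Mtilde"
    unfolding Mtilde_den mem_Collect_eq
    by (rule bexI[rotated], intro exI[of _ "3*k"]) (simp add: h_def[abs_def])
  moreover have "f z - at_x12_zero f z = z 1 ^ 1 * h z" for z
  proof (cases "z \<in> U")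
    case True
    have nz: "den z \<noteq> 0" "den (z(1 := 0)) \<noteq> 0" "G z \<noteq> 0"
      using True unfolding U_def G_def den_def by auto
    have "f z - at_x12_zero f z = P z / den z ^ k - P (z(1 := 0)) / den (z(1 := 0)) ^ k"
      using True U_upd_x12_zero[OF True] unfolding at_x12_zero_def f by simp
    also have "\<dots> = (P z * den (z(1 := 0)) ^ k - P (z(1 := 0)) * den z ^ k) / (den z * den (z(1 := 0))) ^ k"
      unfolding power_mult_distrib by (rule diff_frac_eq) (use nz in simp_all)
    also have "\<dots> = z 1 * R z / (den z * den (z(1 := 0))) ^ k"
      by (simp only: NR)
    also have "\<dots> = z 1 * (R z * G z ^ k / den z ^ (3*k))"
    proof -
      have "den z ^ (3*k) = (den z * den (z(1 := 0))) ^ k * G z ^ k"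
        unfolding G_def by (simp only: power_mult den_cube power_mult_distrib)
      then show ?thesis
        using nz(3) by simp
    qed
    finally show ?thesis
      using True unfolding h_def by simp
  qed (simp add: f at_x12_zero_def h_def)
  ultimately show ?thesis
    unfolding x12pow_Mtilde_def by (auto simp: fun_eq_iff)
qed

lemma Mhat_eq_at_x12_zero:
  assumes g: "g \<in> Mhat" and fg: "(\<lambda>z. f z - g z) \<in> x12pow_Mtilde 1"
  shows "g = at_x12_zero f"
proof
  fix z
  obtain Q k where Q: "Q \<in> polyfun {0,2,3,4,5,6,7,8}"
    and g_eq: "g = (\<lambda>z. if z \<in> U then Q z / (z 0 * z 2 * z 3 * p0 z) ^ k else 0)"
    using g unfolding Mhat_def by blast
  obtain h where h: "(\<lambda>z. f z - g z) = (\<lambda>z. z 1 ^ 1 * h z)"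
    using fg unfolding x12pow_Mtilde_def by blast
  show "g z = at_x12_zero f z"
  proof (cases "z \<in> U")
    case True
    then have "g z = g (z(1 := 0))"
      using U_upd_x12_zero polyfun_upd_indep[OF Q, of 1] unfolding g_eq by simp
    also have "\<dots> = f (z(1 := 0))"
      using fun_cong[OF h, of "z(1 := 0)"] by simp
    finally show ?thesis
      using True unfolding at_x12_zero_def by simp
  qed (simp add: g_eq at_x12_zero_def)
qed

lemma bracket_eq_at_x12_zero:
  assumes "f \<in> Mtilde" "ord f = 0"
  shows "bracket f = at_x12_zero f"
proof -
  have "(THE g. g \<in> Mhat \<and> (\<lambda>z. f z - g z) \<in> x12pow_Mtilde 1) = at_x12_zero f"
  proof (rule the_equality)
    show "at_x12_zero f \<in> Mhat \<and> (\<lambda>z. f z - at_x12_zero f z) \<in> x12pow_Mtilde 1"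
      using at_x12_zero_Mhat[OF assms(1)] diff_at_x12_zero_x12_multiple[OF assms(1)] ..
  qed (simp add: Mhat_eq_at_x12_zero)
  then show ?thesis
    unfolding bracket_def using assms(2) by simp
qed

text \<open>Complex differentiability of \<open>F\<close> in \<open>(x22, x23)\<close> on \<open>A\<close> with partial derivatives
  \<open>F4\<close>, \<open>F5\<close>, phrased as a chain rule along curves moving only these two coordinates.\<close>
definition has_partials45 :: "pt set \<Rightarrow> fn \<Rightarrow> fn \<Rightarrow> fn \<Rightarrow> bool" where
  "has_partials45 A F F4 F5 \<longleftrightarrow>
    (\<forall>w Y X Y' X' s. w(4 := Y s, 5 := X s) \<in> A \<longrightarrow>
       (Y has_field_derivative Y') (at s) \<longrightarrow> (X has_field_derivative X') (at s) \<longrightarrow>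
       ((\<lambda>s. F (w(4 := Y s, 5 := X s))) has_field_derivative
          F4 (w(4 := Y s, 5 := X s)) * Y' + F5 (w(4 := Y s, 5 := X s)) * X') (at s))"

lemma has_partials45D:
  "has_partials45 A F F4 F5 \<Longrightarrow> w(4 := Y s, 5 := X s) \<in> A \<Longrightarrow>
    (Y has_field_derivative Y') (at s) \<Longrightarrow> (X has_field_derivative X') (at s) \<Longrightarrow>
    ((\<lambda>s. F (w(4 := Y s, 5 := X s))) has_field_derivative
       F4 (w(4 := Y s, 5 := X s)) * Y' + F5 (w(4 := Y s, 5 := X s)) * X') (at s)"
  unfolding has_partials45_def by blast

lemma has_partials45_subset: "has_partials45 B F F4 F5 \<Longrightarrow> A \<subseteq> B \<Longrightarrow> has_partials45 A F F4 F5"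
  unfolding has_partials45_def by blast

lemma has_partials45_add:
  assumes P: "has_partials45 A P P4 P5" and Q: "has_partials45 A Q Q4 Q5"
  shows "has_partials45 A (\<lambda>z. P z + Q z) (\<lambda>z. P4 z + Q4 z) (\<lambda>z. P5 z + Q5 z)"
  unfolding has_partials45_def
proof (intro allI impI)
  fix w :: pt and Y X :: "complex \<Rightarrow> complex" and Y' X' s :: complex
  assume A: "w(4 := Y s, 5 := X s) \<in> A" and d: "(Y has_field_derivative Y') (at s)"
    "(X has_field_derivative X') (at s)"
  show "((\<lambda>s. P (w(4 := Y s, 5 := X s)) + Q (w(4 := Y s, 5 := X s))) has_field_derivative
      (P4 (w(4 := Y s, 5 := X s)) + Q4 (w(4 := Y s, 5 := X s))) * Y'
      + (P5 (w(4 := Y s, 5 := X s)) + Q5 (w(4 := Y s, 5 := X s))) * X') (at s)"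
    by (rule DERIV_cong[OF DERIV_add[OF has_partials45D[OF P A d] has_partials45D[OF Q A d]]])
      (simp add: algebra_simps)
qed

lemma has_partials45_mult:
  assumes P: "has_partials45 A P P4 P5" and Q: "has_partials45 A Q Q4 Q5"
  shows "has_partials45 A (\<lambda>z. P z * Q z)
    (\<lambda>z. P4 z * Q z + P z * Q4 z) (\<lambda>z. P5 z * Q z + P z * Q5 z)"
  unfolding has_partials45_def
proof (intro allI impI)
  fix w :: pt and Y X :: "complex \<Rightarrow> complex" and Y' X' s :: complex
  assume A: "w(4 := Y s, 5 := X s) \<in> A" and d: "(Y has_field_derivative Y') (at s)"
    "(X has_field_derivative X') (at s)"
  show "((\<lambda>s. P (w(4 := Y s, 5 := X s)) * Q (w(4 := Y s, 5 := X s))) has_field_derivative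
      (P4 (w(4 := Y s, 5 := X s)) * Q (w(4 := Y s, 5 := X s))
        + P (w(4 := Y s, 5 := X s)) * Q4 (w(4 := Y s, 5 := X s))) * Y'
      + (P5 (w(4 := Y s, 5 := X s)) * Q (w(4 := Y s, 5 := X s))
        + P (w(4 := Y s, 5 := X s)) * Q5 (w(4 := Y s, 5 := X s))) * X') (at s)"
    by (rule DERIV_cong[OF DERIV_mult[OF has_partials45D[OF P A d] has_partials45D[OF Q A d]]])
      (simp add: algebra_simps)
qed

lemma polyfun_has_partials45: "P \<in> polyfun V \<Longrightarrow> \<exists>P4 P5. has_partials45 UNIV P P4 P5"
proof (induction rule: polyfun.induct)
  case (pf_const c)
  show ?case
    unfolding has_partials45_def by (intro exI[of _ "\<lambda>z. 0"]) simp
next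
  case (pf_var i)
  consider "i = 4" | "i = 5" | "i \<noteq> 4" "i \<noteq> 5" by blast
  then show ?case
  proof cases
    case 1
    then show ?thesis
      unfolding has_partials45_def by (intro exI[of _ "\<lambda>z. 1"] exI[of _ "\<lambda>z. 0"]) simp
  next
    case 2
    then show ?thesis
      unfolding has_partials45_def by (intro exI[of _ "\<lambda>z. 0"] exI[of _ "\<lambda>z. 1"]) simp
  next
    case 3
    then show ?thesis
      unfolding has_partials45_def by (intro exI[of _ "\<lambda>z. 0"]) simp
  qed
next
  case (pf_add P Q)
  then show ?case
    using has_partials45_add by blast
next
  case (pf_mult P Q)
  then show ?case
    using has_partials45_mult by blast
qed

lemma has_partials45_divide:
  assumes P: "has_partials45 A P P4 P5" and Q: "has_partials45 A Q Q4 Q5"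
    and nz: "\<And>z. z \<in> A \<Longrightarrow> Q z \<noteq> 0"
  shows "has_partials45 A (\<lambda>z. P z / Q z)
    (\<lambda>z. (P4 z * Q z - P z * Q4 z) / (Q z * Q z)) (\<lambda>z. (P5 z * Q z - P z * Q5 z) / (Q z * Q z))"
proof -
  have quotient_rule: "((d1 * y + d2 * x) * q - p * (e1 * y + e2 * x)) / (q * q)
      = (d1 * q - p * e1) / (q * q) * y + (d2 * q - p * e2) / (q * q) * x" for d1 d2 e1 e2 p q x y :: complex
    by (cases "q = 0") (simp_all add: field_simps)
  show ?thesis
    unfolding has_partials45_def
  proof (intro allI impI)
    fix w :: pt and Y X :: "complex \<Rightarrow> complex" and Y' X' s :: complex
    assume A: "w(4 := Y s, 5 := X s) \<in> A" and d: "(Y has_field_derivative Y') (at s)"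
      "(X has_field_derivative X') (at s)"
    show "((\<lambda>s. P (w(4 := Y s, 5 := X s)) / Q (w(4 := Y s, 5 := X s))) has_field_derivative
        (P4 (w(4 := Y s, 5 := X s)) * Q (w(4 := Y s, 5 := X s))
          - P (w(4 := Y s, 5 := X s)) * Q4 (w(4 := Y s, 5 := X s)))
          / (Q (w(4 := Y s, 5 := X s)) * Q (w(4 := Y s, 5 := X s))) * Y'
        + (P5 (w(4 := Y s, 5 := X s)) * Q (w(4 := Y s, 5 := X s))
          - P (w(4 := Y s, 5 := X s)) * Q5 (w(4 := Y s, 5 := X s)))
          / (Q (w(4 := Y s, 5 := X s)) * Q (w(4 := Y s, 5 := X s))) * X') (at s)"
      by (rule DERIV_cong[OF DERIV_divide[OF has_partials45D[OF P A d] has_partials45D[OF Q A d] nz[OF A]]])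
        (rule quotient_rule)
  qed
qed

lemma has_partials45_x22_line:
  assumes "has_partials45 A F F4 F5" "z(4 := t) \<in> A"
  shows "((\<lambda>t. F (z(4 := t))) has_field_derivative F4 (z(4 := t))) (at t)"
  using has_partials45D[OF assms(1), where w = z and Y = "\<lambda>t. t" and X = "\<lambda>_. z 5" and s = t
      and Y' = 1 and X' = 0] assms(2)
  by (simp add: fun_upd_idem)

lemma has_partials45_x23_line:
  assumes "has_partials45 A F F4 F5" "z(5 := t) \<in> A"
  shows "((\<lambda>t. F (z(5 := t))) has_field_derivative F5 (z(5 := t))) (at t)"
  using has_partials45D[OF assms(1), where w = z and Y = "\<lambda>_. z 4" and X = "\<lambda>t. t" and s = t
      and Y' = 0 and X' = 1] assms(2)
  by (simp add: fun_upd_idem)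

lemma partial_eqI:
  assumes F: "\<And>t. z(i := t) \<in> A \<Longrightarrow> ((\<lambda>t. F (z(i := t))) has_field_derivative Fi (z(i := t))) (at t)"
    and G: "\<And>t. ((\<lambda>t. G (z(i := t))) has_field_derivative Gi (z(i := t))) (at t)"
    and A: "\<And>z. G z \<noteq> 0 \<Longrightarrow> z \<in> A"
    and f: "\<And>z. G z \<noteq> 0 \<Longrightarrow> f z = F z"
    and z: "G z \<noteq> 0"
  shows "partial i f z = Fi z"
proof -
  have "continuous_on UNIV (\<lambda>t. G (z(i := t)))"
    by (rule continuous_at_imp_continuous_on) (auto intro: DERIV_isCont[OF G])
  then have "open {t. G (z(i := t)) \<noteq> 0}"
    by (rule open_Collect_neq[OF _ continuous_on_const])
  moreover have "z i \<in> {t. G (z(i := t)) \<noteq> 0}"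
    using z by simp
  ultimately have ev: "\<forall>\<^sub>F t in nhds (z i). F (z(i := t)) = f (z(i := t))"
    by (rule eventually_nhds_in_open[THEN eventually_mono]) (simp add: f)
  have "((\<lambda>t. F (z(i := t))) has_field_derivative Fi z) (at (z i))"
    using F[of "z i"] A[OF z] by simp
  then have "((\<lambda>t. f (z(i := t))) has_field_derivative Fi z) (at (z i))"
    using DERIV_cong_ev[OF refl ev refl] by simp
  then show ?thesis
    unfolding partial_def by (rule DERIV_imp_deriv)
qed

section \<open>The flow of the field \<open>D2\<close> on \<open>x12 = 0\<close>\<close>

definition rho :: fn where
  "rho w = csqrt (w 0 * w 2)"

definition ucoord :: fn where
  "ucoord w = w 0 * w 5 - w 2 * w 3"

text \<open>On \<open>x12 = 0\<close> the field \<open>D2/2 = (x13 x21 - x11 x23) \<partial>22 + x13 x22 \<partial>23\<close> rotates the pair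
  \<open>(\<rho> x22, u)\<close>, where \<open>\<rho>\<^sup>2 = x11 x13\<close> and \<open>u = x11 x23 - x13 x21\<close>;
  \<open>flow w\<close> is its integral curve through \<open>w\<close>.\<close>
definition flow22 :: "pt \<Rightarrow> complex \<Rightarrow> complex" where
  "flow22 w s = w 4 * cos (2 * rho w * s) - ucoord w / rho w * sin (2 * rho w * s)"

definition flow_u :: "pt \<Rightarrow> complex \<Rightarrow> complex" where
  "flow_u w s = rho w * w 4 * sin (2 * rho w * s) + ucoord w * cos (2 * rho w * s)"

definition flow :: "pt \<Rightarrow> complex \<Rightarrow> pt" where
  "flow w s = w(4 := flow22 w s, 5 := (flow_u w s + w 2 * w 3) / w 0)"

definition slice :: "pt \<Rightarrow> complex \<Rightarrow> pt" where
  "slice z Y = z(1 := 0, 4 := Y, 5 := z 2 * z 3 / z 0)"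

lemma rho_squared: "(rho w)\<^sup>2 = w 0 * w 2"
  unfolding rho_def by simp

lemma rho_nonzero: "w 0 \<noteq> 0 \<Longrightarrow> w 2 \<noteq> 0 \<Longrightarrow> rho w \<noteq> 0"
  using rho_squared[of w] by auto

lemma p0_ucoord: "p0 w = (rho w * w 4)\<^sup>2 + (ucoord w)\<^sup>2"
  unfolding p0_def ucoord_def by (simp add: power_mult_distrib rho_squared)

lemma flow_at_zero: "w 0 \<noteq> 0 \<Longrightarrow> flow w 0 = w"
  unfolding flow_def flow22_def flow_u_def ucoord_def by (simp add: fun_eq_iff)

lemma flow_apply [simp]: "i \<noteq> 4 \<Longrightarrow> i \<noteq> 5 \<Longrightarrow> flow w s i = w i" "flow w s 4 = flow22 w s"
  unfolding flow_def by simp_all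

lemma ucoord_flow: "w 0 \<noteq> 0 \<Longrightarrow> ucoord (flow w s) = flow_u w s"
  unfolding ucoord_def by (simp add: flow_def)

lemma flow22_deriv: "rho w \<noteq> 0 \<Longrightarrow> (flow22 w has_field_derivative - 2 * flow_u w s) (at s)"
  unfolding flow22_def flow_u_def
  by (auto intro!: derivative_eq_intros simp: field_simps)

lemma flow_u_deriv:
  assumes "rho w \<noteq> 0"
  shows "(flow_u w has_field_derivative 2 * w 0 * w 2 * flow22 w s) (at s)"
proof -
  have "(flow_u w has_field_derivative 2 * (rho w)\<^sup>2 * flow22 w s) (at s)"
    unfolding flow22_def flow_u_def using assms
    by (auto intro!: derivative_eq_intros simp: field_simps power2_eq_square)
  then show ?thesis
    by (simp add: rho_squared mult.assoc)
qed

lemma p0_flow: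
  assumes "w 0 \<noteq> 0" "w 2 \<noteq> 0"
  shows "p0 (flow w s) = p0 w"
proof -
  have r: "rho w \<noteq> 0"
    using assms by (rule rho_nonzero)
  have "rho w * flow22 w s = rho w * w 4 * cos (2 * rho w * s) - ucoord w * sin (2 * rho w * s)"
    unfolding flow22_def using r by (simp add: algebra_simps)
  then have "(rho w * flow22 w s)\<^sup>2 + (flow_u w s)\<^sup>2
      = ((rho w * w 4)\<^sup>2 + (ucoord w)\<^sup>2) * ((sin (2 * rho w * s))\<^sup>2 + (cos (2 * rho w * s))\<^sup>2)"
    unfolding flow_u_def by algebra
  moreover have "rho (flow w s) = rho w"
    unfolding rho_def by simp
  ultimately show ?thesis
    using assms by (simp add: p0_ucoord[of "flow w s"] p0_ucoord[of w] ucoord_flow)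
qed

lemma exists_cos_sin_eq:
  fixes a b :: complex
  assumes "a\<^sup>2 + b\<^sup>2 = 1"
  shows "\<exists>\<theta>. cos \<theta> = a \<and> sin \<theta> = b"
proof -
  have prod: "(a + \<i> * b) * (a - \<i> * b) = 1"
    using assms by (simp add: algebra_simps power2_eq_square)
  then have nz: "a + \<i> * b \<noteq> 0"
    by auto
  define \<theta> where "\<theta> = - \<i> * Ln (a + \<i> * b)"
  have e1: "exp (\<i> * \<theta>) = a + \<i> * b"
    unfolding \<theta>_def using nz by (simp add: exp_Ln)
  have e2: "exp (- (\<i> * \<theta>)) = a - \<i> * b"
    using prod e1 by (simp add: exp_minus inverse_unique mult.commute)
  have "cos \<theta> = a" "sin \<theta> = b"
    unfolding cos_exp_eq sin_exp_eq e1 e2 by (simp_all add: field_simps)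
  then show ?thesis by blast
qed

lemma flow_reaches_slice:
  assumes w: "w 0 \<noteq> 0" "w 2 \<noteq> 0" "w 1 = 0" and q: "q\<^sup>2 = p0 w" "q \<noteq> 0"
  shows "\<exists>s. flow w s = slice w (q / rho w)"
proof -
  have r: "rho w \<noteq> 0"
    using w by (intro rho_nonzero)
  have pq: "(rho w * w 4)\<^sup>2 + (ucoord w)\<^sup>2 = q\<^sup>2"
    using q(1) by (simp add: p0_ucoord)
  have "(rho w * w 4 / q)\<^sup>2 + (- ucoord w / q)\<^sup>2 = ((rho w * w 4)\<^sup>2 + (ucoord w)\<^sup>2) / q\<^sup>2"
    by (simp add: power_divide add_divide_distrib)
  also have "\<dots> = 1"
    using q(2) by (simp add: pq)
  finally have "(rho w * w 4 / q)\<^sup>2 + (- ucoord w / q)\<^sup>2 = 1" .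
  then obtain \<theta> where \<theta>: "cos \<theta> = rho w * w 4 / q" "sin \<theta> = - ucoord w / q"
    using exists_cos_sin_eq by blast
  define s where "s = \<theta> / (2 * rho w)"
  have s: "2 * rho w * s = \<theta>"
    unfolding s_def using r by simp
  have "flow_u w s = 0"
    unfolding flow_u_def s \<theta> using q(2) by (simp add: field_simps)
  moreover have "flow22 w s = q / rho w"
  proof -
    have "flow22 w s = ((rho w * w 4)\<^sup>2 + (ucoord w)\<^sup>2) / (rho w * q)"
      unfolding flow22_def s \<theta> using q(2) r by (simp add: field_simps power2_eq_square)
    also have "\<dots> = q / rho w"
      unfolding pq using q(2) r by (simp add: power2_eq_square)
    finally show ?thesis .
  qed
  ultimately have "flow w s = slice w (q / rho w)"
    unfolding flow_def slice_def using w(3) by (auto simp: fun_eq_iff)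
  then show ?thesis by blast
qed

lemma den_flow:
  assumes "w 0 \<noteq> 0" "w 2 \<noteq> 0" "w 1 = 0"
  shows "den (flow w s) = den w"
proof -
  have "pp (flow w s) = p0 (flow w s)"
    by (rule pp_x12_zero) (use assms in simp)
  then show ?thesis
    using assms by (simp add: den_def pp_x12_zero p0_flow)
qed

lemma p0_slice_root:
  assumes "w 0 \<noteq> 0" "w 2 \<noteq> 0"
  shows "p0 (slice w (q / rho w)) = q\<^sup>2"
  using assms rho_nonzero[OF assms] unfolding slice_def p0_def
  by (simp add: power_divide rho_squared)

lemma den_slice_root:
  assumes "w 0 \<noteq> 0" "w 2 \<noteq> 0" "q\<^sup>2 = p0 w"
  shows "den (slice w (q / rho w)) = w 0 * w 2 * w 3 * p0 w * p0 w"
proof -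
  have "pp (slice w (q / rho w)) = p0 (slice w (q / rho w))"
    by (rule pp_x12_zero) (simp add: slice_def)
  then show ?thesis
    using p0_slice_root[OF assms(1,2)] assms(3) by (simp add: den_def slice_def)
qed

lemma has_partials45_constant_along_flow:
  assumes F: "has_partials45 {z. den z \<noteq> 0} F F4 F5"
    and D2: "\<And>z. den z \<noteq> 0 \<Longrightarrow> z 1 = 0 \<Longrightarrow> (z 2 * z 3 - z 0 * z 5) * F4 z + z 2 * z 4 * F5 z = 0"
    and w: "den w \<noteq> 0" "w 1 = 0"
  shows "F (flow w s) = F w"
proof -
  have w02: "w 0 \<noteq> 0" "w 2 \<noteq> 0"
    using den_nonzero_coords[OF w(1)] by auto
  have r: "rho w \<noteq> 0"
    using w02 by (rule rho_nonzero)
  define X where "X s = (flow_u w s + w 2 * w 3) / w 0" for s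
  have flow_eq: "flow w s = w(4 := flow22 w s, 5 := X s)" for s
    unfolding flow_def X_def ..
  have dX: "(X has_field_derivative 2 * w 2 * flow22 w s) (at s)" for s
    unfolding X_def using w02
    by (auto intro!: derivative_eq_intros flow_u_deriv[OF r] simp: field_simps)
  have "((\<lambda>s. F (flow w s)) has_field_derivative 0) (at s)" for s
  proof -
    have den: "den (flow w s) \<noteq> 0"
      using den_flow w w02 by simp
    have "((\<lambda>s. F (flow w s)) has_field_derivative
        F4 (flow w s) * (- 2 * flow_u w s) + F5 (flow w s) * (2 * w 2 * flow22 w s)) (at s)"
      using has_partials45D[OF F _ flow22_deriv[OF r] dX] den unfolding flow_eq by simp
    moreover have "flow w s 2 * flow w s 3 - flow w s 0 * flow w s 5 = - flow_u w s"
      using w02 by (simp add: flow_def field_simps)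
    then have "(- flow_u w s) * F4 (flow w s) + w 2 * flow22 w s * F5 (flow w s) = 0"
      using D2[OF den] w(2) by simp
    then have "F4 (flow w s) * (- 2 * flow_u w s) + F5 (flow w s) * (2 * w 2 * flow22 w s) = 0"
      by (simp add: algebra_simps)
    ultimately show ?thesis
      by metis
  qed
  then obtain C where "\<forall>s. F (flow w s) = C"
    using has_field_derivative_zero_constant[of UNIV "\<lambda>s. F (flow w s)"] by auto
  then show ?thesis
    using flow_at_zero[of w, OF w02(1)] by metis
qed

lemma has_partials45_value_at_slice:
  assumes F: "has_partials45 {z. den z \<noteq> 0} F F4 F5"
    and D2: "\<And>z. den z \<noteq> 0 \<Longrightarrow> z 1 = 0 \<Longrightarrow> (z 2 * z 3 - z 0 * z 5) * F4 z + z 2 * z 4 * F5 z = 0"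
    and w: "den w \<noteq> 0" "w 1 = 0" and q: "q\<^sup>2 = p0 w"
  shows "F w = F (slice w (q / rho w))"
proof -
  have "w 0 \<noteq> 0" "w 2 \<noteq> 0" "q \<noteq> 0"
    using den_nonzero_coords[OF w(1)] q by auto
  then obtain s where "flow w s = slice w (q / rho w)"
    using flow_reaches_slice w(2) q by blast
  then show ?thesis
    using has_partials45_constant_along_flow[OF F D2 w] by metis
qed

lemma x12_zero_D2_equation:
  assumes f: "f = (\<lambda>z. if z \<in> U then P z / den z ^ k else 0)" and P: "P \<in> polyfun {0..8}"
    and eq: "\<forall>z\<in>U. D1 f z + D2 f z = \<omega> * z 1 * f z"
  obtains F4 F5 where "has_partials45 {z. den z \<noteq> 0} (\<lambda>z. P z / den z ^ k) F4 F5"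
    and "\<And>z. den z \<noteq> 0 \<Longrightarrow> z 1 = 0 \<Longrightarrow> (z 2 * z 3 - z 0 * z 5) * F4 z + z 2 * z 4 * F5 z = 0"
proof -
  obtain P4 P5 where P45: "has_partials45 UNIV P P4 P5"
    using polyfun_has_partials45[OF P] by blast
  obtain Q4 Q5 where Q45: "has_partials45 UNIV (\<lambda>z. den z ^ k) Q4 Q5"
    using polyfun_has_partials45[OF polyfun_power[OF den_polyfun]] by blast
  obtain G4 G5 where G45: "has_partials45 UNIV den G4 G5"
    using polyfun_has_partials45[OF den_polyfun] by blast
  define F4 where "F4 z = (P4 z * den z ^ k - P z * Q4 z) / (den z ^ k * den z ^ k)" for z
  define F5 where "F5 z = (P5 z * den z ^ k - P z * Q5 z) / (den z ^ k * den z ^ k)" for z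
  have F45: "has_partials45 {z. den z \<noteq> 0} (\<lambda>z. P z / den z ^ k) F4 F5"
    unfolding F4_def[abs_def] F5_def[abs_def]
    by (rule has_partials45_divide[OF has_partials45_subset[OF P45] has_partials45_subset[OF Q45]]) auto
  have fF: "f z = P z / den z ^ k" if "den z \<noteq> 0" for z
    using that unfolding f U_eq_den by simp
  have partial4: "partial 4 f z = F4 z" if "den z \<noteq> 0" for z
    by (rule partial_eqI[where A = "{z. den z \<noteq> 0}" and G = den and Gi = G4])
      (assumption | rule has_partials45_x22_line[OF F45] has_partials45_x22_line[OF G45 UNIV_I]
        | simp add: fF that)+
  have partial5: "partial 5 f z = F5 z" if "den z \<noteq> 0" for z
    by (rule partial_eqI[where A = "{z. den z \<noteq> 0}" and G = den and Gi = G5])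
      (assumption | rule has_partials45_x23_line[OF F45] has_partials45_x23_line[OF G45 UNIV_I]
        | simp add: fF that)+
  have "(z 2 * z 3 - z 0 * z 5) * F4 z + z 2 * z 4 * F5 z = 0" if z: "den z \<noteq> 0" "z 1 = 0" for z
  proof -
    have "D1 f z + D2 f z = \<omega> * z 1 * f z"
      using eq z(1) unfolding U_eq_den by blast
    moreover have "D1 f z = 0"
      unfolding D1_def using z(2) by simp
    ultimately have "D2 f z = 0"
      using z(2) by simp
    then have "2 * ((z 2 * z 3 - z 0 * z 5) * F4 z + z 2 * z 4 * F5 z) = 0"
      unfolding D2_def partial4[OF z(1)] partial5[OF z(1)] by (simp add: algebra_simps)
    then show ?thesis
      by (simp only: mult_eq_0_iff) simp
  qed
  with F45 show thesis
    by (rule that)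
qed

lemma x12_zero_value_at_slice:
  assumes f: "f = (\<lambda>z. if z \<in> U then P z / den z ^ k else 0)" and P: "P \<in> polyfun {0..8}"
    and eq: "\<forall>z\<in>U. D1 f z + D2 f z = \<omega> * z 1 * f z"
    and w: "den w \<noteq> 0" "w 1 = 0" and q: "q\<^sup>2 = p0 w"
  shows "f w = P (slice w (q / rho w)) / (w 0 * w 2 * w 3 * p0 w * p0 w) ^ k"
proof -
  obtain F4 F5 where F45: "has_partials45 {z. den z \<noteq> 0} (\<lambda>z. P z / den z ^ k) F4 F5"
    and D2: "\<And>z. den z \<noteq> 0 \<Longrightarrow> z 1 = 0 \<Longrightarrow> (z 2 * z 3 - z 0 * z 5) * F4 z + z 2 * z 4 * F5 z = 0"
    using x12_zero_D2_equation[OF f P eq] by blast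
  have "f w = P w / den w ^ k"
    using w(1) unfolding f U_eq_den by simp
  also have "\<dots> = P (slice w (q / rho w)) / den (slice w (q / rho w)) ^ k"
    by (rule has_partials45_value_at_slice[OF F45 D2 w q])
  also have "den (slice w (q / rho w)) = w 0 * w 2 * w 3 * p0 w * p0 w"
    using den_nonzero_coords[OF w(1)] q by (intro den_slice_root) auto
  finally show ?thesis .
qed

section \<open>Polynomials restricted to the slice\<close>

abbreviation M_vars :: "nat set" where
  "M_vars \<equiv> {0, 2, 3, 6, 7, 8}"

definition slice_polynomial :: "fn \<Rightarrow> bool" where
  "slice_polynomial P \<longleftrightarrow> (\<exists>K N c. (\<forall>m. (\<lambda>z. coeff (c z) m) \<in> polyfun M_vars) \<and>
     (\<forall>z. degree (c z) \<le> N) \<and> (\<forall>z Y. z 0 \<noteq> 0 \<longrightarrow> z 0 ^ K * P (slice z Y) = poly (c z) Y))"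

lemma polyfun_coeff_pCons_0: "a \<in> polyfun V \<Longrightarrow> (\<lambda>z. coeff [:a z:] m) \<in> polyfun V"
  by (cases m) (simp_all add: pf_const)

lemma slice_polynomial_const: "slice_polynomial (\<lambda>z. c)"
  unfolding slice_polynomial_def
  by (intro exI[of _ 0] exI[of _ "\<lambda>z. [:c:]"]) (simp add: polyfun_coeff_pCons_0 pf_const)

lemma slice_polynomial_var:
  assumes "i \<in> {0..8}"
  shows "slice_polynomial (\<lambda>z. z i)"
proof -
  consider "i = 1" | "i = 4" | "i = 5" | "i \<in> M_vars"
    using assms by fastforce
  then show ?thesis
  proof cases
    case 1
    then show ?thesis
      unfolding slice_polynomial_def by (intro exI[of _ 0] exI[of _ "\<lambda>z. 0"]) (simp add: pf_const slice_def)
  next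
    case 2
    then show ?thesis
      unfolding slice_polynomial_def by (intro exI[of _ 0] exI[of _ 1] exI[of _ "\<lambda>z. [:0, 1:]"]) (simp add: pf_const slice_def)
  next
    case 3
    have "(\<lambda>z. z 2 * z 3) \<in> polyfun M_vars"
      by (intro pf_mult pf_var) auto
    with 3 show ?thesis
      unfolding slice_polynomial_def by (intro exI[of _ 1] exI[of _ 0] exI[of _ "\<lambda>z. [:z 2 * z 3:]"])
        (simp add: polyfun_coeff_pCons_0 slice_def)
  next
    case 4
    then show ?thesis
      unfolding slice_polynomial_def by (intro exI[of _ 0] exI[of _ 0] exI[of _ "\<lambda>z. [:z i:]"])
        (auto simp: polyfun_coeff_pCons_0 pf_var slice_def)
  qed
qed

lemma slice_polynomial_add:
  assumes "slice_polynomial P" "slice_polynomial Q"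
  shows "slice_polynomial (\<lambda>z. P z + Q z)"
proof -
  obtain K1 N1 c1 where c1: "\<And>m. (\<lambda>z. coeff (c1 z) m) \<in> polyfun M_vars" "\<And>z. degree (c1 z) \<le> N1"
    "\<And>z Y. z 0 \<noteq> 0 \<Longrightarrow> z 0 ^ K1 * P (slice z Y) = poly (c1 z) Y"
    using assms(1) unfolding slice_polynomial_def by blast
  obtain K2 N2 c2 where c2: "\<And>m. (\<lambda>z. coeff (c2 z) m) \<in> polyfun M_vars" "\<And>z. degree (c2 z) \<le> N2"
    "\<And>z Y. z 0 \<noteq> 0 \<Longrightarrow> z 0 ^ K2 * Q (slice z Y) = poly (c2 z) Y"
    using assms(2) unfolding slice_polynomial_def by blast
  define c where "c z = smult (z 0 ^ K2) (c1 z) + smult (z 0 ^ K1) (c2 z)" for z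
  have "(\<lambda>z. coeff (c z) m) \<in> polyfun M_vars" for m
    unfolding c_def using c1(1) c2(1) by (simp add: pf_add pf_mult polyfun_power pf_var)
  moreover have "degree (c z) \<le> max N1 N2" for z
    unfolding c_def using c1(2) c2(2)
    by (meson degree_add_le degree_smult_le max.coboundedI1 max.coboundedI2 order_trans)
  moreover have "z 0 ^ (K1 + K2) * (P (slice z Y) + Q (slice z Y)) = poly (c z) Y" if "z 0 \<noteq> 0" for z Y
    unfolding c_def using c1(3)[of z Y, OF that] c2(3)[of z Y, OF that, symmetric]
    by (simp add: power_add algebra_simps)
  ultimately show ?thesis
    unfolding slice_polynomial_def by blast
qed

lemma slice_polynomial_mult:
  assumes "slice_polynomial P" "slice_polynomial Q"
  shows "slice_polynomial (\<lambda>z. P z * Q z)"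
proof -
  obtain K1 N1 c1 where c1: "\<And>m. (\<lambda>z. coeff (c1 z) m) \<in> polyfun M_vars" "\<And>z. degree (c1 z) \<le> N1"
    "\<And>z Y. z 0 \<noteq> 0 \<Longrightarrow> z 0 ^ K1 * P (slice z Y) = poly (c1 z) Y"
    using assms(1) unfolding slice_polynomial_def by blast
  obtain K2 N2 c2 where c2: "\<And>m. (\<lambda>z. coeff (c2 z) m) \<in> polyfun M_vars" "\<And>z. degree (c2 z) \<le> N2"
    "\<And>z Y. z 0 \<noteq> 0 \<Longrightarrow> z 0 ^ K2 * Q (slice z Y) = poly (c2 z) Y"
    using assms(2) unfolding slice_polynomial_def by blast
  have "(\<lambda>z. coeff (c1 z * c2 z) m) \<in> polyfun M_vars" for m
    unfolding coeff_mult using c1(1) c2(1) by (intro polyfun_sum pf_mult) auto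
  moreover have "degree (c1 z * c2 z) \<le> N1 + N2" for z
    using c1(2) c2(2) degree_mult_le by (meson add_mono order_trans)
  moreover have "z 0 ^ (K1 + K2) * (P (slice z Y) * Q (slice z Y)) = poly (c1 z * c2 z) Y"
    if "z 0 \<noteq> 0" for z Y
    using c1(3)[of z Y, OF that] c2(3)[of z Y, OF that] by (simp add: power_add algebra_simps)
  ultimately show ?thesis
    unfolding slice_polynomial_def by (intro exI[of _ "K1 + K2"] exI[of _ "N1 + N2"] exI[of _ "\<lambda>z. c1 z * c2 z"]) blast
qed

lemma polyfun_slice_polynomial: "P \<in> polyfun V \<Longrightarrow> V \<subseteq> {0..8} \<Longrightarrow> slice_polynomial P"
  by (induction rule: polyfun.induct)
    (auto intro: slice_polynomial_const slice_polynomial_var slice_polynomial_add slice_polynomial_mult)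

section \<open>Laurent polynomials in \<open>p0\<close>\<close>

lemma sum_powers_plus_neg_powers:
  fixes c :: "nat \<Rightarrow> 'a::comm_ring_1"
  shows "(\<Sum>m<2*n. c m * (y^m + (-y)^m)) = 2 * (\<Sum>j<n. c (2*j) * (y\<^sup>2)^j)"
proof (induction n)
  case (Suc n)
  have "c (2*n) * (y^(2*n) + (-y)^(2*n)) = 2 * (c (2*n) * (y\<^sup>2)^n)"
  proof -
    have "(-y)^(2*n) = y^(2*n)" "y^(2*n) = (y\<^sup>2)^n"
      by (simp, rule power_mult)
    then show ?thesis
      by (simp add: algebra_simps)
  qed
  moreover have "c (Suc (2*n)) * (y^Suc (2*n) + (-y)^Suc (2*n)) = 0"
    by simp
  ultimately show ?case
    using Suc.IH by (simp add: algebra_simps)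
qed simp

lemma poly_plus_poly_minus:
  fixes p :: "'a::comm_ring_1 poly"
  assumes "degree p < 2 * n"
  shows "poly p y + poly p (- y) = 2 * (\<Sum>j<n. coeff p (2*j) * (y\<^sup>2)^j)"
proof -
  have "poly p x = (\<Sum>m<2*n. coeff p m * x^m)" for x
    unfolding poly_altdef using assms
    by (intro sum.mono_neutral_left) (auto simp: coeff_eq_0)
  then have "poly p y + poly p (- y) = (\<Sum>m<2*n. coeff p m * (y^m + (-y)^m))"
    by (simp add: sum.distrib distrib_left)
  also have "\<dots> = 2 * (\<Sum>j<n. coeff p (2*j) * (y\<^sup>2)^j)"
    by (rule sum_powers_plus_neg_powers)
  finally show ?thesis .
qed

lemma x12_zero_expansion:
  assumes f: "f = (\<lambda>z. if z \<in> U then P z / den z ^ k else 0)" and P: "P \<in> polyfun {0..8}"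
    and eq: "\<forall>z\<in>U. D1 f z + D2 f z = \<omega> * z 1 * f z"
  obtains c n K where "\<And>j. c j \<in> polyfun M_vars"
    and "\<And>w. den w \<noteq> 0 \<Longrightarrow> w 1 = 0 \<Longrightarrow>
      f w = (\<Sum>j<n. c j w * (p0 w / (w 0 * w 2)) ^ j) / (w 0 ^ K * (w 0 * w 2 * w 3 * p0 w * p0 w) ^ k)"
proof -
  obtain K N cp where cp: "\<And>m. (\<lambda>z. coeff (cp z) m) \<in> polyfun M_vars" "\<And>z. degree (cp z) \<le> N"
    "\<And>z Y. z 0 \<noteq> 0 \<Longrightarrow> z 0 ^ K * P (slice z Y) = poly (cp z) Y"
    using polyfun_slice_polynomial[OF P order_refl] unfolding slice_polynomial_def by blast
  define Den where "Den w = w 0 ^ K * (w 0 * w 2 * w 3 * p0 w * p0 w) ^ k" for w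
  have slice_value: "f w = poly (cp w) (q / rho w) / Den w"
    if w: "den w \<noteq> 0" "w 1 = 0" and q: "q\<^sup>2 = p0 w" for w q
  proof -
    have "w 0 \<noteq> 0"
      using den_nonzero_coords[OF w(1)] by simp
    then have "P (slice w (q / rho w)) = poly (cp w) (q / rho w) / w 0 ^ K"
      using cp(3)[of w "q / rho w"] by (auto simp: field_simps)
    then show ?thesis
      using x12_zero_value_at_slice[OF f P eq w q] by (simp add: Den_def)
  qed
  have "f w = (\<Sum>j<Suc N. coeff (cp w) (2 * j) * (p0 w / (w 0 * w 2)) ^ j) / Den w"
    if w: "den w \<noteq> 0" "w 1 = 0" for w
  proof -
    \<comment> \<open>Both square roots of \<open>p0 w\<close> are admissible, so only the even part survives.\<close>
    define y where "y = csqrt (p0 w) / rho w"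
    have "f w = poly (cp w) y / Den w" "f w = poly (cp w) (- y) / Den w"
      using slice_value[OF w, of "csqrt (p0 w)"] slice_value[OF w, of "- csqrt (p0 w)"]
      unfolding y_def by simp_all
    then have "2 * f w = (poly (cp w) y + poly (cp w) (- y)) / Den w"
      unfolding mult_2 add_divide_distrib by (rule arg_cong2[where f = "(+)"])
    also have "\<dots> = 2 * (\<Sum>j<Suc N. coeff (cp w) (2 * j) * (y\<^sup>2) ^ j) / Den w"
      using cp(2)[of w] by (subst poly_plus_poly_minus[where n = "Suc N"]) auto
    also have "y\<^sup>2 = p0 w / (w 0 * w 2)"
      unfolding y_def by (simp add: power_divide rho_squared)
    finally show ?thesis
      by (simp only: times_divide_eq_right[symmetric] mult_cancel_left) simp
  qed
  with cp(1) show thesis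
    by (intro that[of "\<lambda>j z. coeff (cp z) (2 * j)" "Suc N" K]) (simp_all only: Den_def)
qed

lemma M_monomial_quotient:
  assumes C: "C \<in> polyfun M_vars"
  shows "(\<lambda>z. if z \<in> U then C z / (z 0 ^ K * (z 0 * z 2 * z 3) ^ k * (z 0 * z 2) ^ j) else 0) \<in> M"
proof -
  define X :: fn where "X z = z 2 ^ K * z 3 ^ (K + j)" for z
  have num: "(\<lambda>z. C z * X z) \<in> polyfun M_vars"
    unfolding X_def using C by (intro pf_mult polyfun_power pf_var) auto
  have "C z / (z 0 ^ K * (z 0 * z 2 * z 3) ^ k * (z 0 * z 2) ^ j)
      = C z * X z / (z 0 * z 2 * z 3) ^ (K + k + j)" if "z \<in> U" for z
  proof -
    have "X z \<noteq> 0"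
      using that unfolding U_def X_def by simp
    moreover have "(z 0 * z 2 * z 3) ^ (K + k + j) = z 0 ^ K * (z 0 * z 2 * z 3) ^ k * (z 0 * z 2) ^ j * X z"
      unfolding X_def by (simp add: power_add power_mult_distrib algebra_simps)
    ultimately show ?thesis
      by simp
  qed
  then show ?thesis
    unfolding M_def mem_Collect_eq
    by (intro bexI[OF _ num] exI[of _ "K + k + j"]) (auto simp: fun_eq_iff)
qed

lemma quotient_times_power_int:
  fixes t :: "'a::field"
  assumes "t \<noteq> 0" "A \<noteq> 0" "B \<noteq> 0" "Q \<noteq> 0"
  shows "C / (A * B ^ k * Q ^ j) * t powi (int j - int (2 * k)) = C * (t / Q) ^ j / (A * (B * t * t) ^ k)"
proof -
  have "t powi (int j - int (2 * k)) = t ^ j / (t * t) ^ k"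
    using power_int_diff[of t "int j" "int (2 * k)"] assms(1)
    by (simp only: power_int_of_nat power_mult power2_eq_square) simp
  then show ?thesis
    using assms by (simp add: power_mult_distrib power_divide field_simps)
qed

lemma laurent_polynomial_in_p0:
  assumes c: "\<And>j. c j \<in> polyfun M_vars"
  shows "\<exists>(n1::int) (n2::int) (a :: int \<Rightarrow> fn). (\<forall>i\<in>{-n1..n2}. a i \<in> M) \<and>
    (\<lambda>z. if z \<in> U then (\<Sum>j<n. c j z * (p0 z / (z 0 * z 2)) ^ j)
                          / (z 0 ^ K * (z 0 * z 2 * z 3 * p0 z * p0 z) ^ k) else 0)
      = (\<lambda>z. \<Sum>i\<in>{-n1..n2}. a i z * (p0 z) powi i)"
proof -
  define a :: "int \<Rightarrow> fn" where "a i z = (if z \<in> U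
      then c (nat (i + 2 * k)) z / (z 0 ^ K * (z 0 * z 2 * z 3) ^ k * (z 0 * z 2) ^ nat (i + 2 * k))
      else 0)" for i z
  have "a i \<in> M" for i
    unfolding a_def[abs_def] by (rule M_monomial_quotient[OF c])
  moreover have "(if z \<in> U then (\<Sum>j<n. c j z * (p0 z / (z 0 * z 2)) ^ j)
                          / (z 0 ^ K * (z 0 * z 2 * z 3 * p0 z * p0 z) ^ k) else 0)
      = (\<Sum>i\<in>{- int (2 * k)..int n - 1 - int (2 * k)}. a i z * (p0 z) powi i)" for z
  proof (cases "z \<in> U")
    case True
    then have nz: "z 0 \<noteq> 0" "z 2 \<noteq> 0" "z 3 \<noteq> 0" "p0 z \<noteq> 0"
      unfolding U_def by auto
    have "c j z * (p0 z / (z 0 * z 2)) ^ j / (z 0 ^ K * (z 0 * z 2 * z 3 * p0 z * p0 z) ^ k)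
        = a (int j - int (2 * k)) z * (p0 z) powi (int j - int (2 * k))" for j
    proof -
      have a_eq: "a (int j - int (2 * k)) z = c j z / (z 0 ^ K * (z 0 * z 2 * z 3) ^ k * (z 0 * z 2) ^ j)"
        using True unfolding a_def by simp
      show ?thesis
        unfolding a_eq by (rule quotient_times_power_int[symmetric]) (use nz in simp_all)
    qed
    then have "(\<Sum>j<n. c j z * (p0 z / (z 0 * z 2)) ^ j) / (z 0 ^ K * (z 0 * z 2 * z 3 * p0 z * p0 z) ^ k)
        = (\<Sum>j<n. a (int j - int (2 * k)) z * (p0 z) powi (int j - int (2 * k)))"
      by (simp add: sum_divide_distrib)
    also have "\<dots> = (\<Sum>i\<in>{- int (2 * k)..int n - 1 - int (2 * k)}. a i z * (p0 z) powi i)"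
      by (rule sum.reindex_bij_witness[of _ "\<lambda>i. nat (i + int (2 * k))" "\<lambda>j. int j - int (2 * k)"]) auto
    finally show ?thesis
      using True by simp
  qed (simp add: a_def)
  ultimately show ?thesis
    by blast
qed

theorem lemma11:
  fixes f :: fn and \<omega> :: complex
  assumes "f \<in> Mtilde" and "f \<noteq> (\<lambda>z. 0)" and "ord f = 0"
    and "\<forall>z\<in>U. D1 f z + D2 f z = \<omega> * z 1 * f z"
  shows "\<exists>(n1::int) (n2::int) (a :: int \<Rightarrow> fn).
           (\<forall>i\<in>{-n1..n2}. a i \<in> M) \<and>
           bracket f = (\<lambda>z. \<Sum>i\<in>{-n1..n2}. a i z * (p0 z) powi i)"
proof -
  obtain P k where P: "P \<in> polyfun {0..8}" and f: "f = (\<lambda>z. if z \<in> U then P z / den z ^ k else 0)"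
    using assms(1) unfolding Mtilde_den by blast
  show ?thesis
  proof (rule x12_zero_expansion[OF f P assms(4)])
    fix c n K
    assume c: "\<And>j. c j \<in> polyfun M_vars"
      and expansion: "\<And>w. den w \<noteq> 0 \<Longrightarrow> w 1 = 0 \<Longrightarrow>
        f w = (\<Sum>j<n. c j w * (p0 w / (w 0 * w 2)) ^ j) / (w 0 ^ K * (w 0 * w 2 * w 3 * p0 w * p0 w) ^ k)"
    have "bracket f = (\<lambda>z. if z \<in> U then (\<Sum>j<n. c j z * (p0 z / (z 0 * z 2)) ^ j)
                          / (z 0 ^ K * (z 0 * z 2 * z 3 * p0 z * p0 z) ^ k) else 0)"
      unfolding bracket_eq_at_x12_zero[OF assms(1,3)]
      by (rule at_x12_zero_eqI[OF expansion]) (simp_all add: polyfun_upd_indep[OF c])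
    then show ?thesis
      using laurent_polynomial_in_p0[OF c] by simp
  qed
qed

end
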